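(* Let $V$ be a finite dimensional normed vector space, $H\le O(V)$, and $(V,H,L_i)$ holonomic spaces whose holonomic metrics $d_{L_i}$ converge uniformly on compact sets to a semi-metric $d_\infty$. Suppose there is $c>0$ with $c\le\mathrm{HolRad}_i(0)$ for all $i$, where $\mathrm{HolRad}_i(0)$ is the holonomy radius at $0$ of $(V,H,L_i)$. Then $d_\infty$ is nondegenerate, i.e. a metric.
   Context: $O(V)$: norm-preserving linear maps. Group-norm on $H$: $L\ge0$, $L(a)=0$ iff $a=e$, $L(a^{-1})=L(a)$, $L(ab)\le L(a)+L(b)$. Holonomic space $(V,H,L)$: $H\le O(V)$, $L$ a group-norm, such that for every $u$ there is $R>0$ with $\|v-w\|^2-\|av-w\|^2\le L(a)^2$ for all $a\in H$ and $\|u-v\|,\|u-w\|<R$; holonomic metric $d_L(u,v)=\inf_{a\in H}\sqrt{L(a)^2+\|au-v\|^2}$. Holonomy radius at $u$: the supremum of $R>0$ such that $d_L(v,w)=\|v-w\|$ for all $v,w$ in the norm ball of radius $R$ about $u$. *)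

theory Defs
  imports "HOL-Analysis.Analysis"
begin

definition fin_dim_space :: "'v::real_normed_vector itself \<Rightarrow> bool" where
  "fin_dim_space _ \<longleftrightarrow> (\<exists>B::'v set. finite B \<and> span B = UNIV)"

definition orth_maps :: "('v::real_normed_vector \<Rightarrow> 'v) set" where
  "orth_maps = {a. linear a \<and> (\<forall>v. norm (a v) = norm v)}"

definition subgroup_O :: "('v::real_normed_vector \<Rightarrow> 'v) set \<Rightarrow> bool" where
  "subgroup_O H \<longleftrightarrow> H \<subseteq> orth_maps \<and> id \<in> H \<and>
     (\<forall>a\<in>H. \<forall>b\<in>H. a \<circ> b \<in> H) \<and> (\<forall>a\<in>H. bij a \<and> inv a \<in> H)"

definition group_norm :: "('v::real_normed_vector \<Rightarrow> 'v) set \<Rightarrow> (('v \<Rightarrow> 'v) \<Rightarrow> real) \<Rightarrow> bool" where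
  "group_norm H L \<longleftrightarrow>
     (\<forall>a\<in>H. L a \<ge> 0) \<and> (\<forall>a\<in>H. L a = 0 \<longleftrightarrow> a = id) \<and>
     (\<forall>a\<in>H. L (inv a) = L a) \<and> (\<forall>a\<in>H. \<forall>b\<in>H. L (a \<circ> b) \<le> L a + L b)"

definition holonomic :: "('v::real_normed_vector \<Rightarrow> 'v) set \<Rightarrow> (('v \<Rightarrow> 'v) \<Rightarrow> real) \<Rightarrow> bool" where
  "holonomic H L \<longleftrightarrow> subgroup_O H \<and> group_norm H L \<and>
     (\<forall>u. \<exists>R>0. \<forall>a\<in>H. \<forall>v w. norm (u - v) < R \<longrightarrow> norm (u - w) < R \<longrightarrow>
         (norm (v - w))\<^sup>2 - (norm (a v - w))\<^sup>2 \<le> (L a)\<^sup>2)"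

definition hol_metric :: "('v::real_normed_vector \<Rightarrow> 'v) set \<Rightarrow> (('v \<Rightarrow> 'v) \<Rightarrow> real) \<Rightarrow> 'v \<Rightarrow> 'v \<Rightarrow> real" where
  "hol_metric H L u v = (INF a\<in>H. sqrt ((L a)\<^sup>2 + (norm (a u - v))\<^sup>2))"

text \<open>Holonomy radius at u (possibly infinite, hence extended real).\<close>
definition hol_radius :: "('v::real_normed_vector \<Rightarrow> 'v) set \<Rightarrow> (('v \<Rightarrow> 'v) \<Rightarrow> real) \<Rightarrow> 'v \<Rightarrow> ereal" where
  "hol_radius H L u = Sup {ereal R | R. R > 0 \<and>
     (\<forall>v w. norm (u - v) < R \<longrightarrow> norm (u - w) < R \<longrightarrow> hol_metric H L v w = norm (v - w))}"

definition semi_metric :: "('v \<Rightarrow> 'v \<Rightarrow> real) \<Rightarrow> bool" where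
  "semi_metric d \<longleftrightarrow> (\<forall>x y. d x y \<ge> 0) \<and> (\<forall>x. d x x = 0) \<and> (\<forall>x y. d x y = d y x) \<and>
     (\<forall>x y z. d x z \<le> d x y + d y z)"

end

theory Submission
  imports Defs
begin

(* A holonomy radius of at least c at 0 says that on the
   ball of radius r < c about 0 the holonomic metric d_L is the norm metric.
   Applied to the pair (v, a v) for a in H this bounds the displacement
   ||v - a v|| by L(a) on that ball, and linearity of a spreads the bound to
   all of V:  ||x - a x|| <= (2 ||x|| / r) L(a).  Hence, for every a in H,
   ||x - y|| <= ||x - a x|| + ||a x - y|| <= (1 + 2 ||x|| / r) sqrt(L(a)^2 + ||a x - y||^2),
   and taking the infimum over a gives ||x - y|| <= (1 + 2 ||x|| / r) d_L(x,y)
   with a constant independent of L.  Uniform convergence on the compact set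
   {(x,y)} gives d_{L_i}(x,y) --> d_inf(x,y), so d_inf(x,y) = 0 forces x = y. *)

lemma hol_metric_terms_bdd_below:
  "bdd_below ((\<lambda>a. sqrt ((L a)\<^sup>2 + (norm (a u - v))\<^sup>2)) ` H)"
  by (rule bdd_belowI[where m=0]) auto

lemma hol_metric_orbit_le:
  assumes "a \<in> H" and "L a \<ge> 0"
  shows "hol_metric H L v (a v) \<le> L a"
proof -
  have "hol_metric H L v (a v) \<le> sqrt ((L a)\<^sup>2 + (norm (a v - a v))\<^sup>2)"
    unfolding hol_metric_def by (rule cINF_lower[OF hol_metric_terms_bdd_below assms(1)])
  also have "\<dots> = L a" using assms(2) by simp
  finally show ?thesis .
qed

lemma hol_metric_eq_norm_within_radius:
  assumes "ereal c \<le> hol_radius H L u" and "r < c"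
    and "norm (u - v) < r" and "norm (u - w) < r"
  shows "hol_metric H L v w = norm (v - w)"
proof -
  have "ereal r < ereal c" using assms(2) by simp
  then have "ereal r < hol_radius H L u" using assms(1) by (rule less_le_trans)
  then obtain R where "R > r" and "\<forall>v w. norm (u - v) < R \<longrightarrow> norm (u - w) < R \<longrightarrow>
      hol_metric H L v w = norm (v - w)"
    unfolding hol_radius_def less_Sup_iff by auto
  then show ?thesis using assms(3,4) by auto
qed

lemma linear_displacement_bound:
  fixes a :: "'v::real_normed_vector \<Rightarrow> 'v"
  assumes "linear a" and "r > 0"
    and small: "\<And>v. norm v < r \<Longrightarrow> norm (v - a v) \<le> K"
  shows "norm (x - a x) \<le> (2 * norm x / r) * K"
proof (cases "x = 0")
  case True
  then show ?thesis using linear_0[OF assms(1)] by simp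
next
  case False
  define t where "t = r / (2 * norm x)"
  have t_pos: "t > 0" using False assms(2) by (simp add: t_def)
  have "norm (t *\<^sub>R x) = r / 2" using False assms(2) by (simp add: t_def)
  then have "norm (t *\<^sub>R x - a (t *\<^sub>R x)) \<le> K" using assms(2) by (intro small) simp
  moreover have "t *\<^sub>R x - a (t *\<^sub>R x) = t *\<^sub>R (x - a x)"
    using linear_cmul[OF assms(1)] by (simp add: scaleR_diff_right)
  ultimately have "t * norm (x - a x) \<le> K" using t_pos by simp
  then have "norm (x - a x) \<le> K / t" using t_pos by (simp add: field_simps)
  also have "K / t = (2 * norm x / r) * K" using False assms(2) by (simp add: t_def field_simps)
  finally show ?thesis .
qed

text \<open>Displacement bound for the elements of H: inside the holonomy radius at 0
  the displacement of v is d_L(v, a v), hence at most L(a); linearity does the rest.\<close>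
lemma holonomic_displacement_bound:
  assumes hol: "holonomic H L" and "a \<in> H"
    and rad: "ereal c \<le> hol_radius H L 0" and "0 < r" "r < c"
  shows "norm (x - a x) \<le> (2 * norm x / r) * L a"
proof -
  have "subgroup_O H" and "group_norm H L" using hol unfolding holonomic_def by auto
  then have lin: "linear a" and isom: "\<And>v. norm (a v) = norm v" and La: "L a \<ge> 0"
    using \<open>a \<in> H\<close> unfolding subgroup_O_def orth_maps_def group_norm_def by auto
  have "norm (v - a v) \<le> L a" if "norm v < r" for v
  proof -
    have "norm (v - a v) = hol_metric H L v (a v)"
      using hol_metric_eq_norm_within_radius[OF rad \<open>r < c\<close>, of v "a v"] that isom by simp
    also have "\<dots> \<le> L a" using \<open>a \<in> H\<close> La by (rule hol_metric_orbit_le)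
    finally show ?thesis .
  qed
  then show ?thesis by (rule linear_displacement_bound[OF lin \<open>0 < r\<close>])
qed

lemma norm_le_hol_metric:
  assumes hol: "holonomic H L"
    and rad: "ereal c \<le> hol_radius H L 0" and "0 < r" "r < c"
  shows "norm (x - y) \<le> (1 + 2 * norm x / r) * hol_metric H L x y"
proof -
  define M where "M = 2 * norm x / r"
  have M_nonneg: "M \<ge> 0" using \<open>0 < r\<close> by (simp add: M_def)
  have "id \<in> H" using hol unfolding holonomic_def subgroup_O_def by auto
  have "norm (x - y) / (1 + M) \<le> sqrt ((L a)\<^sup>2 + (norm (a x - y))\<^sup>2)" if "a \<in> H" for a
  proof -
    let ?s = "sqrt ((L a)\<^sup>2 + (norm (a x - y))\<^sup>2)"
    have "L a \<le> ?s" and "norm (a x - y) \<le> ?s" by (simp_all add: real_le_rsqrt)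
    have "norm (x - y) \<le> norm (x - a x) + norm (a x - y)"
      using norm_triangle_ineq[of "x - a x" "a x - y"] by simp
    also have "\<dots> \<le> M * ?s + ?s"
      using holonomic_displacement_bound[OF hol that rad \<open>0 < r\<close> \<open>r < c\<close>, of x]
        mult_left_mono[OF \<open>L a \<le> ?s\<close> M_nonneg] \<open>norm (a x - y) \<le> ?s\<close>
      unfolding M_def by linarith
    finally show ?thesis using M_nonneg by (simp add: field_simps)
  qed
  then have "norm (x - y) / (1 + M) \<le> hol_metric H L x y"
    unfolding hol_metric_def using \<open>id \<in> H\<close> by (intro cINF_greatest) auto
  then show ?thesis using M_nonneg by (simp add: M_def field_simps)
qed

theorem mainTheorem16:
  fixes H :: "('v::real_normed_vector \<Rightarrow> 'v) set"
    and L :: "nat \<Rightarrow> ('v \<Rightarrow> 'v) \<Rightarrow> real"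
    and dinf :: "'v \<Rightarrow> 'v \<Rightarrow> real"
    and c :: real
  assumes "fin_dim_space TYPE('v)"
    and "subgroup_O H"
    and "\<And>i. holonomic H (L i)"
    and "\<And>K. compact K \<Longrightarrow>
           uniform_limit K (\<lambda>i (x, y). hol_metric H (L i) x y) (\<lambda>(x, y). dinf x y) sequentially"
    and "semi_metric dinf"
    and "c > 0"
    and "\<And>i. ereal c \<le> hol_radius H (L i) 0"
  shows "\<forall>x y. dinf x y = 0 \<longrightarrow> x = y"
proof (intro allI impI)
  fix x y assume "dinf x y = 0"
  define C where "C = 1 + 2 * norm x / (c / 2)"
  have bound: "norm (x - y) \<le> C * hol_metric H (L i) x y" for i
    unfolding C_def using assms(6) by (intro norm_le_hol_metric[OF assms(3) assms(7)]) auto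
  have "(\<lambda>i. hol_metric H (L i) x y) \<longlonglongrightarrow> 0"
    using tendsto_uniform_limitI[OF assms(4)[of "{(x, y)}"], of "(x, y)"] \<open>dinf x y = 0\<close>
    by simp
  then have "(\<lambda>i. C * hol_metric H (L i) x y) \<longlonglongrightarrow> 0"
    by (simp add: tendsto_mult_right_zero)
  then have "norm (x - y) \<le> 0" using bound by (intro LIMSEQ_le_const) auto
  then show "x = y" by simp
qed

end
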